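(* For all integers $p\ge1$ and $q\ge3$, $\chi_s(UC_q\,\square\,BC_{2p+1})>4$.
   Context: A signed graph $(G,\sigma)$ is a simple loopless undirected graph with a signature $\sigma:E(G)\to\{+1,-1\}$. Switching a vertex negates the signs of its incident edges; two signatures are equivalent if one is obtained from the other by switching a set of vertices. A homomorphism of $(G,\sigma)$ to $(H,\pi)$ is a graph homomorphism $\varphi:G\to H$ for which there is a signature $\sigma'$ equivalent to $\sigma$ with $\pi(\varphi(u)\varphi(v))=\sigma'(uv)$ for every edge $uv$; $\chi_s(G,\sigma)$ is the smallest order of a signed graph to which $(G,\sigma)$ admits a homomorphism. $UC_k$ (resp. $BC_k$) denotes a cycle on $k$ vertices with an odd (resp. even) number of negative edges (well defined up to equivalence). The Cartesian product $(G,\sigma)\,\square\,(H,\pi)$ is the signed graph on $G\,\square\,H$ where $(u,v_1)(u,v_2)$ has sign $\pi(v_1v_2)$ and $(u_1,v)(u_2,v)$ has sign $\sigma(u_1u_2)$. *)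

theory Defs
  imports Main
begin

text \<open>A signed graph is given by a vertex set V, a set E of edges (2-element subsets
of V) and a signature sigma on edges, where sigma e = True means that e is negative.\<close>

definition signed_graph :: "'a set \<Rightarrow> 'a set set \<Rightarrow> ('a set \<Rightarrow> bool) \<Rightarrow> bool" where
  "signed_graph V E sigma \<longleftrightarrow> finite V \<and>
     (\<forall>e\<in>E. \<exists>u v. u \<in> V \<and> v \<in> V \<and> u \<noteq> v \<and> e = {u, v})"

definition signed_hom ::
  "'a set \<Rightarrow> 'a set set \<Rightarrow> ('a set \<Rightarrow> bool) \<Rightarrow>
   'b set \<Rightarrow> 'b set set \<Rightarrow> ('b set \<Rightarrow> bool) \<Rightarrow> ('a \<Rightarrow> 'b) \<Rightarrow> bool" where
  "signed_hom V E sigma W F pi phi \<longleftrightarrow>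
     (\<forall>v\<in>V. phi v \<in> W) \<and>
     (\<exists>X\<subseteq>V. \<forall>u v. {u, v} \<in> E \<longrightarrow>
        {phi u, phi v} \<in> F \<and>
        pi {phi u, phi v} = (sigma {u, v} \<noteq> ((u \<in> X) \<noteq> (v \<in> X))))"

text \<open>Signed chromatic number: least order of a signed graph (vertices taken, without loss
of generality, among the naturals) to which the given signed graph maps.\<close>

definition signed_chi :: "'a set \<Rightarrow> 'a set set \<Rightarrow> ('a set \<Rightarrow> bool) \<Rightarrow> nat" where
  "signed_chi V E sigma = (LEAST k. \<exists>(W::nat set) F pi phi.
      signed_graph W F pi \<and> card W = k \<and> signed_hom V E sigma W F pi phi)"

definition cyc_V :: "nat \<Rightarrow> nat set" where
  "cyc_V k = {..<k}"

definition cyc_E :: "nat \<Rightarrow> nat set set" where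
  "cyc_E k = {{i, Suc i mod k} | i. i < k}"

text \<open>UC_k: one negative edge {0,1} (odd number); BC_k: all edges positive (even number).\<close>

definition UC_sig :: "nat set \<Rightarrow> bool" where
  "UC_sig e \<longleftrightarrow> e = {0, 1}"

definition BC_sig :: "nat set \<Rightarrow> bool" where
  "BC_sig e \<longleftrightarrow> False"

definition prod_V :: "'a set \<Rightarrow> 'b set \<Rightarrow> ('a \<times> 'b) set" where
  "prod_V V1 V2 = V1 \<times> V2"

definition prod_E :: "'a set \<Rightarrow> 'a set set \<Rightarrow> 'b set \<Rightarrow> 'b set set \<Rightarrow> ('a \<times> 'b) set set" where
  "prod_E V1 E1 V2 E2 =
     {{(u, v1), (u, v2)} | u v1 v2. u \<in> V1 \<and> {v1, v2} \<in> E2} \<union>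
     {{(u1, v), (u2, v)} | u1 u2 v. v \<in> V2 \<and> {u1, u2} \<in> E1}"

definition prod_sig :: "('a set \<Rightarrow> bool) \<Rightarrow> ('b set \<Rightarrow> bool) \<Rightarrow> ('a \<times> 'b) set \<Rightarrow> bool" where
  "prod_sig sigma pi e = (if card (fst ` e) = 1 then pi (snd ` e) else sigma (fst ` e))"

end

(*
  A homomorphism to a signed graph with at most four vertices gives one to a signed complete
  graph K4, and up to switching K4 carries one of three signatures: all positive, all negative,
  or a single negative edge ab.  The product contains an unbalanced cycle (a copy of UC_q),
  which rules out the first, and a balanced odd cycle (a copy of BC_{2p+1}), which rules out
  the second.  For the third, read each row (a copy of BC_{2p+1}) as a closed walk in K4 and
  take the parity of its switched vertices plus its steps from b to a.  Every square of the
  product relates the contributions of its two row edges, and summing over the 2p+1 squares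
  between consecutive rows shows that the parity changes exactly across the negative edge of
  UC_q, i.e. once around a cycle, which is impossible.
*)
theory Submission
  imports Defs
begin

definition complete_E :: "nat \<Rightarrow> nat set set" where
  "complete_E k = {{a, b} | a b. a < k \<and> b < k \<and> a \<noteq> b}"

lemma signed_graph_edge_distinct:
  assumes "signed_graph V E \<sigma>" "{u, v} \<in> E"
  shows "u \<in> V" "v \<in> V" "u \<noteq> v"
proof -
  obtain a b where "a \<in> V" "b \<in> V" "a \<noteq> b" "{u, v} = {a, b}"
    using assms unfolding signed_graph_def by blast
  then show "u \<in> V" "v \<in> V" "u \<noteq> v" unfolding doubleton_eq_iff by auto
qed

lemma signed_graph_complete: "signed_graph {..<k} (complete_E k) \<pi>"
  unfolding signed_graph_def complete_E_def by blast

lemma signed_hom_comp: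
  assumes "signed_graph V E \<sigma>"
    and "signed_hom V E \<sigma> W F \<pi> \<phi>" and "signed_hom W F \<pi> U G \<rho> \<psi>"
  shows "signed_hom V E \<sigma> U G \<rho> (\<psi> \<circ> \<phi>)"
proof -
  obtain X where X: "\<And>u v. {u, v} \<in> E \<Longrightarrow>
      {\<phi> u, \<phi> v} \<in> F \<and> \<pi> {\<phi> u, \<phi> v} = (\<sigma> {u, v} \<noteq> ((u \<in> X) \<noteq> (v \<in> X)))"
    using assms(2) unfolding signed_hom_def by blast
  obtain Y where Y: "\<And>\<alpha> \<beta>. {\<alpha>, \<beta>} \<in> F \<Longrightarrow>
      {\<psi> \<alpha>, \<psi> \<beta>} \<in> G \<and> \<rho> {\<psi> \<alpha>, \<psi> \<beta>} = (\<pi> {\<alpha>, \<beta>} \<noteq> ((\<alpha> \<in> Y) \<noteq> (\<beta> \<in> Y)))"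
    using assms(3) unfolding signed_hom_def by blast
  define Z where "Z = {v \<in> V. (v \<in> X) \<noteq> (\<phi> v \<in> Y)}"
  have edges: "{\<psi> (\<phi> u), \<psi> (\<phi> v)} \<in> G \<and>
      \<rho> {\<psi> (\<phi> u), \<psi> (\<phi> v)} = (\<sigma> {u, v} \<noteq> ((u \<in> Z) \<noteq> (v \<in> Z)))" if "{u, v} \<in> E" for u v
    using X[OF that] Y[of "\<phi> u" "\<phi> v"] signed_graph_edge_distinct[OF assms(1) that]
    unfolding Z_def by auto
  have vertices: "\<psi> (\<phi> v) \<in> U" if "v \<in> V" for v
    using assms(2,3) that unfolding signed_hom_def by blast
  show ?thesis
    unfolding signed_hom_def comp_def
  proof (intro conjI exI[of _ Z] ballI allI impI)
    show "Z \<subseteq> V" unfolding Z_def by blast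
  qed (use edges vertices in auto)
qed

lemma signed_hom_complete_of_card_le:
  assumes "signed_graph W F \<pi>" and "card W \<le> k"
  obtains \<rho> \<psi> where "signed_hom W F \<pi> {..<k} (complete_E k) \<rho> \<psi>"
proof -
  have "finite W" using assms(1) unfolding signed_graph_def by blast
  then obtain \<psi> :: "'a \<Rightarrow> nat" where inj: "inj_on \<psi> W" and range: "\<psi> ` W = {..<card W}"
    using ex_bij_betw_finite_nat unfolding bij_betw_def atLeast0LessThan by blast
  have below_k: "\<psi> w < k" if "w \<in> W" for w
    using range assms(2) that by (metis imageI lessThan_iff order_less_le_trans)
  define \<rho> where "\<rho> e = \<pi> (inv_into W \<psi> ` e)" for e
  have "{\<psi> \<alpha>, \<psi> \<beta>} \<in> complete_E k \<and> \<rho> {\<psi> \<alpha>, \<psi> \<beta>} = \<pi> {\<alpha>, \<beta>}" if "{\<alpha>, \<beta>} \<in> F" for \<alpha> \<beta>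
  proof -
    have "\<alpha> \<in> W" "\<beta> \<in> W" "\<alpha> \<noteq> \<beta>" using signed_graph_edge_distinct[OF assms(1) that] by auto
    then have "\<psi> \<alpha> < k" "\<psi> \<beta> < k" "\<psi> \<alpha> \<noteq> \<psi> \<beta>"
      using inj below_k by (auto dest: inj_onD)
    moreover have "inv_into W \<psi> ` {\<psi> \<alpha>, \<psi> \<beta>} = {\<alpha>, \<beta>}"
      using inj \<open>\<alpha> \<in> W\<close> \<open>\<beta> \<in> W\<close> by simp
    ultimately show ?thesis unfolding complete_E_def \<rho>_def by auto
  qed
  then have "signed_hom W F \<pi> {..<k} (complete_E k) \<rho> \<psi>"
    using below_k unfolding signed_hom_def by (intro conjI exI[of _ "{}"]) simp_all
  then show thesis by (rule that)
qed

lemma hom_complete_of_signed_chi_le: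
  assumes "signed_graph V E \<sigma>" and "signed_chi V E \<sigma> \<le> k"
  obtains \<pi> \<phi> where "signed_hom V E \<sigma> {..<k} (complete_E k) \<pi> \<phi>"
proof -
  define target_of_order where "target_of_order m \<longleftrightarrow> (\<exists>(W::nat set) F \<pi> \<phi>.
      signed_graph W F \<pi> \<and> card W = m \<and> signed_hom V E \<sigma> W F \<pi> \<phi>)" for m
  obtain \<rho> \<psi> where "signed_hom V E \<sigma> {..<card V} (complete_E (card V)) \<rho> \<psi>"
    using signed_hom_complete_of_card_le[OF assms(1) order_refl] .
  then have "target_of_order (card V)"
    unfolding target_of_order_def using signed_graph_complete by fastforce
  then have "target_of_order (signed_chi V E \<sigma>)"
    unfolding signed_chi_def target_of_order_def[symmetric] by (rule LeastI)
  then obtain W :: "nat set" and F \<pi> \<phi> where W: "signed_graph W F \<pi>" "card W \<le> k"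
      and hom: "signed_hom V E \<sigma> W F \<pi> \<phi>"
    unfolding target_of_order_def using assms(2) by auto
  obtain \<rho>' \<psi>' where "signed_hom W F \<pi> {..<k} (complete_E k) \<rho>' \<psi>'"
    using signed_hom_complete_of_card_le[OF W] .
  from signed_hom_comp[OF assms(1) hom this] show thesis by (rule that)
qed

lemma complete_switching_hom:
  assumes "X \<subseteq> {..<k}"
    and "\<And>\<alpha> \<beta>. \<alpha> < \<beta> \<Longrightarrow> \<beta> < k \<Longrightarrow> \<pi>' {\<alpha>, \<beta>} = (\<pi> {\<alpha>, \<beta>} \<noteq> ((\<alpha> \<in> X) \<noteq> (\<beta> \<in> X)))"
  shows "signed_hom {..<k} (complete_E k) \<pi> {..<k} (complete_E k) \<pi>' id"
proof -
  have "\<pi>' {\<alpha>, \<beta>} = (\<pi> {\<alpha>, \<beta>} \<noteq> ((\<alpha> \<in> X) \<noteq> (\<beta> \<in> X)))" if "{\<alpha>, \<beta>} \<in> complete_E k" for \<alpha> \<beta>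
  proof -
    have "\<alpha> < k" "\<beta> < k" "\<alpha> \<noteq> \<beta>"
      using signed_graph_edge_distinct[OF signed_graph_complete that] by auto
    then show ?thesis
      using assms(2)[of \<alpha> \<beta>] assms(2)[of \<beta> \<alpha>] by (cases "\<alpha> < \<beta>") (auto simp: insert_commute)
  qed
  then show ?thesis
    using assms(1) unfolding signed_hom_def by (intro conjI exI[of _ X]) auto
qed

lemma less_4_pairs:
  fixes \<alpha> \<beta> :: nat
  assumes "\<alpha> < \<beta>" "\<beta> < 4"
  obtains "\<alpha> = 0" "\<beta> = 1" | "\<alpha> = 0" "\<beta> = 2" | "\<alpha> = 0" "\<beta> = 3"
    | "\<alpha> = 1" "\<beta> = 2" | "\<alpha> = 1" "\<beta> = 3" | "\<alpha> = 2" "\<beta> = 3"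
  using assms by (auto simp: less_Suc_eq numeral_eq_Suc)

lemma complete_4_switching_hom:
  fixes \<theta> :: "nat \<Rightarrow> bool"
  assumes "\<pi>' {0, 1} = (\<pi> {0, 1} \<noteq> (\<theta> 0 \<noteq> \<theta> 1))" "\<pi>' {0, 2} = (\<pi> {0, 2} \<noteq> (\<theta> 0 \<noteq> \<theta> 2))"
    "\<pi>' {0, 3} = (\<pi> {0, 3} \<noteq> (\<theta> 0 \<noteq> \<theta> 3))" "\<pi>' {1, 2} = (\<pi> {1, 2} \<noteq> (\<theta> 1 \<noteq> \<theta> 2))"
    "\<pi>' {1, 3} = (\<pi> {1, 3} \<noteq> (\<theta> 1 \<noteq> \<theta> 3))" "\<pi>' {2, 3} = (\<pi> {2, 3} \<noteq> (\<theta> 2 \<noteq> \<theta> 3))"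
  shows "signed_hom {..<4} (complete_E 4) \<pi> {..<4} (complete_E 4) \<pi>' id"
proof (rule complete_switching_hom[of "{\<alpha>. \<alpha> < 4 \<and> \<theta> \<alpha>}"])
  fix \<alpha> \<beta> :: nat
  assume "\<alpha> < \<beta>" "\<beta> < 4"
  then show "\<pi>' {\<alpha>, \<beta>} = (\<pi> {\<alpha>, \<beta>} \<noteq> ((\<alpha> \<in> {\<alpha>. \<alpha> < 4 \<and> \<theta> \<alpha>}) \<noteq> (\<beta> \<in> {\<alpha>. \<alpha> < 4 \<and> \<theta> \<alpha>})))"
    by (rule less_4_pairs) (use assms in simp_all)
qed auto

lemma K4_switching_classes:
  fixes \<pi> :: "nat set \<Rightarrow> bool"
  obtains "signed_hom {..<4} (complete_E 4) \<pi> {..<4} (complete_E 4) (\<lambda>_. False) id"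
    | "signed_hom {..<4} (complete_E 4) \<pi> {..<4} (complete_E 4) (\<lambda>_. True) id"
    | a b where "a \<noteq> b" "signed_hom {..<4} (complete_E 4) \<pi> {..<4} (complete_E 4) (\<lambda>e. e = {a, b}) id"
proof -
  \<comment> \<open>Switching at t makes all edges at vertex 3 positive; the signs s of the triangle
    0 1 2 then determine the class.\<close>
  define t where "t \<alpha> \<longleftrightarrow> \<alpha> \<noteq> 3 \<and> \<pi> {\<alpha>, 3}" for \<alpha> :: nat
  define s where "s \<alpha> \<beta> \<longleftrightarrow> (\<pi> {\<alpha>, \<beta>} \<noteq> (t \<alpha> \<noteq> t \<beta>))" for \<alpha> \<beta> :: nat
  have t: "\<pi> {0, 3} = t 0" "\<pi> {1, 3} = t 1" "\<pi> {2, 3} = t 2" "\<not> t 3"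
    unfolding t_def by simp_all
  have switch: "signed_hom {..<4} (complete_E 4) \<pi> {..<4} (complete_E 4) \<pi>' id"
    if signs: "\<pi>' {0, 1} = (s 0 1 \<noteq> (y 0 \<noteq> y 1))" "\<pi>' {0, 2} = (s 0 2 \<noteq> (y 0 \<noteq> y 2))"
      "\<pi>' {0, 3} = (y 0 \<noteq> y 3)" "\<pi>' {1, 2} = (s 1 2 \<noteq> (y 1 \<noteq> y 2))"
      "\<pi>' {1, 3} = (y 1 \<noteq> y 3)" "\<pi>' {2, 3} = (y 2 \<noteq> y 3)"
    for \<pi>' and y :: "nat \<Rightarrow> bool"
    by (rule complete_4_switching_hom[of _ _ "\<lambda>\<alpha>. t \<alpha> \<noteq> y \<alpha>"]) (unfold signs s_def t(1-3), auto simp: t(4))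
  consider "\<not> s 0 1" "\<not> s 0 2" "\<not> s 1 2" | "s 0 1" "s 0 2" "s 1 2"
    | "s 0 1" "\<not> s 0 2" "\<not> s 1 2" | "\<not> s 0 1" "s 0 2" "\<not> s 1 2" | "\<not> s 0 1" "\<not> s 0 2" "s 1 2"
    | "s 0 1" "s 0 2" "\<not> s 1 2" | "s 0 1" "\<not> s 0 2" "s 1 2" | "\<not> s 0 1" "s 0 2" "s 1 2"
    by blast
  then show thesis
  proof cases
    case 1
    then show thesis by (intro that(1) switch[of _ "\<lambda>_. False"]) simp_all
  next
    case 2
    then show thesis by (intro that(2) switch[of _ "\<lambda>\<alpha>. \<alpha> = 3"]) simp_all
  next
    case 3
    then show thesis by (intro that(3)[of 0 1] switch[of _ "\<lambda>_. False"]) (simp_all add: doubleton_eq_iff)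
  next
    case 4
    then show thesis by (intro that(3)[of 0 2] switch[of _ "\<lambda>_. False"]) (simp_all add: doubleton_eq_iff)
  next
    case 5
    then show thesis by (intro that(3)[of 1 2] switch[of _ "\<lambda>_. False"]) (simp_all add: doubleton_eq_iff)
  next
    case 6
    then show thesis by (intro that(3)[of 0 3] switch[of _ "\<lambda>\<alpha>. \<alpha> = 0"]) (simp_all add: doubleton_eq_iff)
  next
    case 7
    then show thesis by (intro that(3)[of 1 3] switch[of _ "\<lambda>\<alpha>. \<alpha> = 1"]) (simp_all add: doubleton_eq_iff)
  next
    case 8
    then show thesis by (intro that(3)[of 2 3] switch[of _ "\<lambda>\<alpha>. \<alpha> = 2"]) (simp_all add: doubleton_eq_iff)
  qed
qed

lemma Suc_mod_neq:
  assumes "2 \<le> k" "i < k"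
  shows "Suc i mod k \<noteq> i"
  using assms by (cases "Suc i = k") auto

lemma signed_graph_cycle:
  assumes "2 \<le> k"
  shows "signed_graph (cyc_V k) (cyc_E k) \<sigma>"
proof -
  have "\<exists>u v. u < k \<and> v < k \<and> u \<noteq> v \<and> {i, Suc i mod k} = {u, v}" if "i < k" for i
    using Suc_mod_neq[OF assms that] that by (intro exI[of _ i] exI[of _ "Suc i mod k"]) simp
  then show ?thesis unfolding signed_graph_def cyc_V_def cyc_E_def by auto
qed

lemma signed_graph_prod:
  assumes "signed_graph V\<^sub>1 E\<^sub>1 \<sigma>\<^sub>1" and "signed_graph V\<^sub>2 E\<^sub>2 \<sigma>\<^sub>2"
  shows "signed_graph (prod_V V\<^sub>1 V\<^sub>2) (prod_E V\<^sub>1 E\<^sub>1 V\<^sub>2 E\<^sub>2) (prod_sig \<sigma>\<^sub>1 \<sigma>\<^sub>2)"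
  unfolding signed_graph_def
proof (intro conjI ballI)
  show "finite (prod_V V\<^sub>1 V\<^sub>2)"
    using assms unfolding signed_graph_def prod_V_def by simp
next
  fix e assume "e \<in> prod_E V\<^sub>1 E\<^sub>1 V\<^sub>2 E\<^sub>2"
  then show "\<exists>u v. u \<in> prod_V V\<^sub>1 V\<^sub>2 \<and> v \<in> prod_V V\<^sub>1 V\<^sub>2 \<and> u \<noteq> v \<and> e = {u, v}"
    unfolding prod_E_def prod_V_def
    using signed_graph_edge_distinct[OF assms(1)] signed_graph_edge_distinct[OF assms(2)] by blast
qed

lemma sum_lessThan_Suc_mod:
  assumes "0 < n"
  shows "(\<Sum>v<n. f (Suc v mod n)) = (\<Sum>v<n. f v :: 'a :: comm_monoid_add)"
proof -
  obtain m where m: "n = Suc m" using assms by (cases n) auto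
  have "(\<Sum>v<Suc m. f (Suc v mod Suc m)) = (\<Sum>v<m. f (Suc v mod Suc m)) + f 0"
    by simp
  also have "(\<Sum>v<m. f (Suc v mod Suc m)) = (\<Sum>v<m. f (Suc v))"
    by (rule sum.cong) auto
  also have "(\<Sum>v<m. f (Suc v)) + f 0 = (\<Sum>v<Suc m. f v)"
    by (subst sum.lessThan_Suc_shift) (simp add: add.commute)
  finally show ?thesis using m by simp
qed

text \<open>Summed over the cycle, the terms r v and r (Suc v mod n) cancel in pairs.\<close>

lemma parity_card_cyclic:
  fixes g h r :: "nat \<Rightarrow> bool"
  assumes "\<And>v. v < n \<Longrightarrow> (g v \<noteq> h v) = (s \<noteq> (r v \<noteq> r (Suc v mod n)))"
  shows "(even (card {v. v < n \<and> g v}) \<noteq> even (card {v. v < n \<and> h v})) = (s \<and> odd n)"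
proof -
  let ?N = "\<lambda>P. \<Sum>v<n. of_bool (P v) :: nat"
  have card: "card {v. v < n \<and> P v} = ?N P" for P
    by (simp add: Int_def conj_commute)
  let ?T = "\<lambda>v. of_bool (g v) + of_bool (h v) + of_bool (r v) + of_bool (r (Suc v mod n)) + of_bool s :: nat"
  have "even (?T v)" if "v < n" for v
    using assms[OF that] by (cases "g v"; cases "h v"; cases "r v"; cases "r (Suc v mod n)"; cases s) simp_all
  then have "even (\<Sum>v<n. ?T v)"
    by (intro dvd_sum) simp
  also have "(\<Sum>v<n. ?T v) = ?N g + ?N h + 2 * ?N r + n * of_bool s"
    using sum_lessThan_Suc_mod[of n "\<lambda>v. of_bool (r v) :: nat"] by (cases "n = 0") (simp_all add: sum.distrib)
  finally have "even (?N g + ?N h + 2 * ?N r + n * of_bool s)" .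
  then show ?thesis unfolding card by (cases s) auto
qed

lemma even_card_cyclic_changes:
  fixes f :: "nat \<Rightarrow> bool"
  shows "even (card {i. i < k \<and> f i \<noteq> f (Suc i mod k)})"
  using parity_card_cyclic[of k "\<lambda>i. f i \<noteq> f (Suc i mod k)" "\<lambda>_. False" False f] by simp

abbreviation torus_V :: "nat \<Rightarrow> nat \<Rightarrow> (nat \<times> nat) set" where
  "torus_V q n \<equiv> prod_V (cyc_V q) (cyc_V n)"

abbreviation torus_E :: "nat \<Rightarrow> nat \<Rightarrow> (nat \<times> nat) set set" where
  "torus_E q n \<equiv> prod_E (cyc_V q) (cyc_E q) (cyc_V n) (cyc_E n)"

abbreviation UC_BC_sig :: "(nat \<times> nat) set \<Rightarrow> bool" where
  "UC_BC_sig \<equiv> prod_sig UC_sig BC_sig"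

lemma UC_sig_cycle_edge:
  assumes "3 \<le> q" "u < q"
  shows "UC_sig {u, Suc u mod q} = (u = 0)"
proof (cases "u = 1")
  case True
  then have "Suc u mod q = 2" using assms by simp
  then show ?thesis using True unfolding UC_sig_def doubleton_eq_iff by simp
qed (use assms in \<open>auto simp: UC_sig_def doubleton_eq_iff\<close>)

lemma signed_hom_torus_edges:
  assumes "signed_hom (torus_V q n) (torus_E q n) UC_BC_sig W F \<pi> \<phi>" and "3 \<le> q"
  obtains x :: "nat \<Rightarrow> nat \<Rightarrow> bool" where
    "\<And>u v. u < q \<Longrightarrow> v < n \<Longrightarrow> {\<phi> (u, v), \<phi> (u, Suc v mod n)} \<in> F \<and>
       \<pi> {\<phi> (u, v), \<phi> (u, Suc v mod n)} = (x u v \<noteq> x u (Suc v mod n))"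
    "\<And>u v. u < q \<Longrightarrow> v < n \<Longrightarrow> {\<phi> (u, v), \<phi> (Suc u mod q, v)} \<in> F \<and>
       \<pi> {\<phi> (u, v), \<phi> (Suc u mod q, v)} = ((u = 0) \<noteq> (x u v \<noteq> x (Suc u mod q) v))"
proof -
  obtain X where X: "\<And>s t. {s, t} \<in> torus_E q n \<Longrightarrow> {\<phi> s, \<phi> t} \<in> F \<and>
      \<pi> {\<phi> s, \<phi> t} = (UC_BC_sig {s, t} \<noteq> ((s \<in> X) \<noteq> (t \<in> X)))"
    using assms(1) unfolding signed_hom_def by blast
  show thesis
  proof (rule that[of "\<lambda>u v. (u, v) \<in> X"])
    fix u v assume "u < q" "v < n"
    then have "{(u, v), (u, Suc v mod n)} \<in> torus_E q n"
      unfolding prod_E_def cyc_V_def cyc_E_def by blast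
    moreover have "UC_BC_sig {(u, v), (u, Suc v mod n)} = False"
      unfolding prod_sig_def BC_sig_def by simp
    ultimately show "{\<phi> (u, v), \<phi> (u, Suc v mod n)} \<in> F \<and>
        \<pi> {\<phi> (u, v), \<phi> (u, Suc v mod n)} = (((u, v) \<in> X) \<noteq> ((u, Suc v mod n) \<in> X))"
      using X by simp
  next
    fix u v assume uv: "u < q" "v < n"
    then have "{(u, v), (Suc u mod q, v)} \<in> torus_E q n"
      unfolding prod_E_def cyc_V_def cyc_E_def by blast
    moreover have "UC_BC_sig {(u, v), (Suc u mod q, v)} = (u = 0)"
      using Suc_mod_neq[of q u] UC_sig_cycle_edge[of q u] assms(2) uv
      unfolding prod_sig_def by simp
    ultimately show "{\<phi> (u, v), \<phi> (Suc u mod q, v)} \<in> F \<and>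
        \<pi> {\<phi> (u, v), \<phi> (Suc u mod q, v)} = ((u = 0) \<noteq> (((u, v) \<in> X) \<noteq> ((Suc u mod q, v) \<in> X)))"
      using X by simp
  qed
qed

lemma no_hom_torus_all_positive:
  assumes "3 \<le> q" and "0 < n"
  shows "\<not> signed_hom (torus_V q n) (torus_E q n) UC_BC_sig W F (\<lambda>_. False) \<phi>"
proof
  assume "signed_hom (torus_V q n) (torus_E q n) UC_BC_sig W F (\<lambda>_. False) \<phi>"
  then obtain x :: "nat \<Rightarrow> nat \<Rightarrow> bool" where
    "\<And>u v. u < q \<Longrightarrow> v < n \<Longrightarrow> {\<phi> (u, v), \<phi> (u, Suc v mod n)} \<in> F \<and>
       False = (x u v \<noteq> x u (Suc v mod n))" and
    col: "\<And>u v. u < q \<Longrightarrow> v < n \<Longrightarrow> {\<phi> (u, v), \<phi> (Suc u mod q, v)} \<in> F \<and>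
       False = ((u = 0) \<noteq> (x u v \<noteq> x (Suc u mod q) v))"
    using assms(1) by (rule signed_hom_torus_edges) (rule that)
  have "x u 0 \<noteq> x (Suc u mod q) 0 \<longleftrightarrow> u = 0" if "u < q" for u
    using col[OF that assms(2)] by auto
  then have "{u. u < q \<and> x u 0 \<noteq> x (Suc u mod q) 0} = {u. u < q \<and> u = 0}"
    by blast
  also have "\<dots> = {0}"
    using assms(1) by auto
  finally show False
    using even_card_cyclic_changes[of q "\<lambda>u. x u 0"] by simp
qed

lemma no_hom_torus_all_negative:
  assumes "3 \<le> q" and "odd n"
  shows "\<not> signed_hom (torus_V q n) (torus_E q n) UC_BC_sig W F (\<lambda>_. True) \<phi>"
proof
  assume "signed_hom (torus_V q n) (torus_E q n) UC_BC_sig W F (\<lambda>_. True) \<phi>"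
  then obtain x :: "nat \<Rightarrow> nat \<Rightarrow> bool" where
    row: "\<And>u v. u < q \<Longrightarrow> v < n \<Longrightarrow> {\<phi> (u, v), \<phi> (u, Suc v mod n)} \<in> F \<and>
       True = (x u v \<noteq> x u (Suc v mod n))" and
    "\<And>u v. u < q \<Longrightarrow> v < n \<Longrightarrow> {\<phi> (u, v), \<phi> (Suc u mod q, v)} \<in> F \<and>
       True = ((u = 0) \<noteq> (x u v \<noteq> x (Suc u mod q) v))"
    using assms(1) by (rule signed_hom_torus_edges) (rule that)
  have "{v. v < n \<and> x 0 v \<noteq> x 0 (Suc v mod n)} = {v. v < n}"
    using row[of 0] assms(1) by auto
  then show False
    using even_card_cyclic_changes[of n "x 0"] assms(2) by simp
qed

text \<open>Here w0 w1 and w3 w2 are the images of the row edges of a square,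
  w0 w3 and w1 w2 those of its column edges, which have sign s, and the x are the
  switching bits of its corners.\<close>

lemma one_negative_edge_square:
  assumes "a \<noteq> b" "w0 \<noteq> w1" "w3 \<noteq> w2" "w0 \<noteq> w3" "w1 \<noteq> w2"
    and "({w0, w1} = {a, b}) = (x0 \<noteq> x1)" "({w3, w2} = {a, b}) = (x3 \<noteq> x2)"
    and "({w0, w3} = {a, b}) = (s \<noteq> (x0 \<noteq> x3))" "({w1, w2} = {a, b}) = (s \<noteq> (x1 \<noteq> x2))"
  shows "((x0 \<noteq> (w0 = b \<and> w1 = a)) \<noteq> (x3 \<noteq> (w3 = b \<and> w2 = a))) =
    (s \<noteq> ((x0 \<noteq> (w0 = b \<and> w3 = a)) \<noteq> (x1 \<noteq> (w1 = b \<and> w2 = a))))"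
  using assms unfolding doubleton_eq_iff
  by (cases "w0 = a"; cases "w2 = a"; cases "w1 = b"; cases "w3 = b") auto

lemma no_hom_torus_one_negative_edge:
  assumes "3 \<le> q" and "odd n" and "a \<noteq> b" and "signed_graph W F (\<lambda>e. e = {a, b})"
  shows "\<not> signed_hom (torus_V q n) (torus_E q n) UC_BC_sig W F (\<lambda>e. e = {a, b}) \<phi>"
proof
  assume "signed_hom (torus_V q n) (torus_E q n) UC_BC_sig W F (\<lambda>e. e = {a, b}) \<phi>"
  then obtain x :: "nat \<Rightarrow> nat \<Rightarrow> bool" where
    row: "\<And>u v. u < q \<Longrightarrow> v < n \<Longrightarrow> {\<phi> (u, v), \<phi> (u, Suc v mod n)} \<in> F \<and>
       ({\<phi> (u, v), \<phi> (u, Suc v mod n)} = {a, b}) = (x u v \<noteq> x u (Suc v mod n))" and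
    col: "\<And>u v. u < q \<Longrightarrow> v < n \<Longrightarrow> {\<phi> (u, v), \<phi> (Suc u mod q, v)} \<in> F \<and>
       ({\<phi> (u, v), \<phi> (Suc u mod q, v)} = {a, b}) = ((u = 0) \<noteq> (x u v \<noteq> x (Suc u mod q) v))"
    using assms(1) by (rule signed_hom_torus_edges) (rule that)
  note ends_distinct = signed_graph_edge_distinct(3)[OF assms(4)]
  define A where "A u v \<longleftrightarrow> x u v \<noteq> (\<phi> (u, v) = b \<and> \<phi> (u, Suc v mod n) = a)" for u v
  define f where "f u \<longleftrightarrow> even (card {v. v < n \<and> A u v})" for u
  have "f u \<noteq> f (Suc u mod q) \<longleftrightarrow> u = 0" if u: "u < q" for u
  proof -
    let ?u' = "Suc u mod q"
    have u': "?u' < q" using u by simp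
    define r where "r v \<longleftrightarrow> x u v \<noteq> (\<phi> (u, v) = b \<and> \<phi> (?u', v) = a)" for v
    have "(A u v \<noteq> A ?u' v) = ((u = 0) \<noteq> (r v \<noteq> r (Suc v mod n)))" if v: "v < n" for v
    proof -
      have v': "Suc v mod n < n" using v by simp
      show ?thesis
        unfolding A_def r_def
        by (rule one_negative_edge_square[OF assms(3)
              ends_distinct[OF conjunct1[OF row[OF u v]]] ends_distinct[OF conjunct1[OF row[OF u' v]]]
              ends_distinct[OF conjunct1[OF col[OF u v]]] ends_distinct[OF conjunct1[OF col[OF u v']]]
              conjunct2[OF row[OF u v]] conjunct2[OF row[OF u' v]]
              conjunct2[OF col[OF u v]] conjunct2[OF col[OF u v']]])
    qed
    then have "(f u \<noteq> f ?u') = ((u = 0) \<and> odd n)"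
      unfolding f_def by (rule parity_card_cyclic)
    then show ?thesis using assms(2) by simp
  qed
  then have "{u. u < q \<and> f u \<noteq> f (Suc u mod q)} = {u. u < q \<and> u = 0}"
    by blast
  also have "\<dots> = {0}"
    using assms(1) by auto
  finally show False
    using even_card_cyclic_changes[of q f] by simp
qed

theorem lemma6p1:
  fixes p q :: nat
  assumes "p \<ge> 1" and "q \<ge> 3"
  shows "signed_chi (prod_V (cyc_V q) (cyc_V (2*p+1)))
                    (prod_E (cyc_V q) (cyc_E q) (cyc_V (2*p+1)) (cyc_E (2*p+1)))
                    (prod_sig UC_sig BC_sig) > 4"
proof (rule ccontr)
  let ?n = "2 * p + 1"
  have graph: "signed_graph (torus_V q ?n) (torus_E q ?n) UC_BC_sig"
    using assms by (intro signed_graph_prod signed_graph_cycle) simp_all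
  assume "\<not> signed_chi (torus_V q ?n) (torus_E q ?n) UC_BC_sig > 4"
  then obtain \<pi> \<phi> where hom: "signed_hom (torus_V q ?n) (torus_E q ?n) UC_BC_sig {..<4} (complete_E 4) \<pi> \<phi>"
    using hom_complete_of_signed_chi_le[OF graph] by (meson not_less)
  note switch = signed_hom_comp[OF graph hom]
  have "0 < ?n" "odd ?n" by simp_all
  show False
  proof (cases rule: K4_switching_classes[of \<pi>])
    case 1
    from no_hom_torus_all_positive[OF assms(2) \<open>0 < ?n\<close>] switch[OF 1] show False by (rule notE)
  next
    case 2
    from no_hom_torus_all_negative[OF assms(2) \<open>odd ?n\<close>] switch[OF 2] show False by (rule notE)
  next
    case (3 a b)
    from no_hom_torus_one_negative_edge[OF assms(2) \<open>odd ?n\<close> 3(1) signed_graph_complete] switch[OF 3(2)]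
    show False by (rule notE)
  qed
qed

end
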